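(* (Generalized Fractional Noether's Theorem.) Let $a<b$, $1<p<\infty$, $q=p/(p-1)$, $\Delta=\{(t,\tau):a\le\tau<t\le b\}$, $k\in L^q(\Delta;\mathbb{R})$, $\lambda,\mu\in\mathbb{R}$, and let $K_P,K_{P^*},A_{P^*},B_P$ be as in the context. Let $F:\mathbb{R}^4\times[a,b]\to\mathbb{R}$ be of class $C^1$ and write $(\star_y)(t)=(y(t),K_P[y](t),\dot y(t),B_P[y](t),t)$. Let $\phi:[-\varepsilon,\varepsilon]\times[a,b]\times\mathbb{R}\to\mathbb{R}$ be of class $C^2$ with $\phi(0,t,x)=x$, set $\xi(t,x)=\frac{\partial\phi}{\partial\theta}(0,t,x)$ and $\hat y(t)=\phi(\theta,t,y(t))$. Suppose $F$ is invariant under this family, i.e. $t\mapsto\xi(t,y(t))\in C^1([a,b];\mathbb{R})$ with $K_P[\tau\mapsto\xi(\tau,y(\tau))],B_P[\tau\mapsto\xi(\tau,y(\tau))]\in C([a,b];\mathbb{R})$, and $F(\star_y)(t)=F(\star_{\hat y})(t)$ for all $\theta\in[-\varepsilon,\varepsilon]$ and all $y\in C^1([a,b];\mathbb{R})$ with $K_P[y],B_P[y]\in C([a,b];\mathbb{R})$. Then every generalized fractional extremal $y$ satisfies, for $t\in(a,b)$, $$\frac{d}{dt}\big(\xi(t,y(t))\,\partial_3F(\star_y)(t)\big)+\mathbf{D}\big[\xi(\cdot,y(\cdot)),\partial_4F(\star_y)\big](t)+\mathbf{I}\big[\xi(\cdot,y(\cdot)),\partial_2F(\star_y)\big](t)=0,$$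 where $\mathbf{D}[f,g]=f\cdot A_{P^*}[g]+g\cdot B_P[f]$ and $\mathbf{I}[f,g]=-f\cdot K_{P^*}[g]+g\cdot K_P[f]$.
   Context: $K_P[f](t)=\lambda\int_a^t k(t,\tau)f(\tau)d\tau+\mu\int_t^b k(\tau,t)f(\tau)d\tau$; $K_{P^*}[f](t)=\mu\int_a^t k(t,\tau)f(\tau)d\tau+\lambda\int_t^b k(\tau,t)f(\tau)d\tau$; $A_{P^*}=\frac{d}{dt}\circ K_{P^*}$; $B_P=K_P\circ\frac{d}{dt}$. $\partial_iF$ is the partial derivative of $F$ in its $i$-th argument. A generalized fractional extremal is a function $y\in C^1([a,b];\mathbb{R})$ with $K_P[y],B_P[y]\in C([a,b];\mathbb{R})$ satisfying for $t\in(a,b)$ the generalized Euler–Lagrange equation $\frac{d}{dt}[\partial_3F(\star_y)(t)]+A_{P^*}[\tau\mapsto\partial_4F(\star_y)(\tau)](t)=\partial_1F(\star_y)(t)+K_{P^*}[\tau\mapsto\partial_2F(\star_y)(\tau)](t)$ (with the needed regularity: $K_{P^*}[\partial_2F(\star_y)]$ continuous, $\partial_3F(\star_y)$ and $K_{P^*}[\partial_4F(\star_y)]$ continuously differentiable on $[a,b]$). *)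

theory Defs
  imports "HOL-Analysis.Analysis"
begin

definition C1_on :: "'a::real_normed_vector set \<Rightarrow> ('a \<Rightarrow> 'b::real_normed_vector) \<Rightarrow> bool" where
  "C1_on S f \<longleftrightarrow> (\<exists>f'. (\<forall>x\<in>S. (f has_derivative blinfun_apply (f' x)) (at x within S))
                         \<and> continuous_on S f')"

definition C2_on :: "'a::real_normed_vector set \<Rightarrow> ('a \<Rightarrow> 'b::real_normed_vector) \<Rightarrow> bool" where
  "C2_on S f \<longleftrightarrow> (\<exists>f'. (\<forall>x\<in>S. (f has_derivative blinfun_apply (f' x)) (at x within S))
                         \<and> C1_on S f')"

definition dot :: "real \<Rightarrow> real \<Rightarrow> (real \<Rightarrow> real) \<Rightarrow> real \<Rightarrow> real" where
  "dot a b y t = vector_derivative y (at t within {a..b})"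

definition KP :: "real \<Rightarrow> real \<Rightarrow> (real \<Rightarrow> real \<Rightarrow> real) \<Rightarrow> real \<Rightarrow> real \<Rightarrow> (real \<Rightarrow> real) \<Rightarrow> real \<Rightarrow> real" where
  "KP a b k lam mu f t = lam * (LINT \<tau>:{a..t}|lebesgue. k t \<tau> * f \<tau>)
                        + mu * (LINT \<tau>:{t..b}|lebesgue. k \<tau> t * f \<tau>)"

definition KPs :: "real \<Rightarrow> real \<Rightarrow> (real \<Rightarrow> real \<Rightarrow> real) \<Rightarrow> real \<Rightarrow> real \<Rightarrow> (real \<Rightarrow> real) \<Rightarrow> real \<Rightarrow> real" where
  "KPs a b k lam mu f t = mu * (LINT \<tau>:{a..t}|lebesgue. k t \<tau> * f \<tau>)
                         + lam * (LINT \<tau>:{t..b}|lebesgue. k \<tau> t * f \<tau>)"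

definition APs :: "real \<Rightarrow> real \<Rightarrow> (real \<Rightarrow> real \<Rightarrow> real) \<Rightarrow> real \<Rightarrow> real \<Rightarrow> (real \<Rightarrow> real) \<Rightarrow> real \<Rightarrow> real" where
  "APs a b k lam mu f t = deriv (KPs a b k lam mu f) t"

definition BP :: "real \<Rightarrow> real \<Rightarrow> (real \<Rightarrow> real \<Rightarrow> real) \<Rightarrow> real \<Rightarrow> real \<Rightarrow> (real \<Rightarrow> real) \<Rightarrow> real \<Rightarrow> real" where
  "BP a b k lam mu f = KP a b k lam mu (dot a b f)"

definition admissible :: "real \<Rightarrow> real \<Rightarrow> (real \<Rightarrow> real \<Rightarrow> real) \<Rightarrow> real \<Rightarrow> real \<Rightarrow> (real \<Rightarrow> real) \<Rightarrow> bool" where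
  "admissible a b k lam mu y \<longleftrightarrow> C1_on {a..b} y
     \<and> continuous_on {a..b} (KP a b k lam mu y) \<and> continuous_on {a..b} (BP a b k lam mu y)"

type_synonym lagr = "real \<Rightarrow> real \<Rightarrow> real \<Rightarrow> real \<Rightarrow> real \<Rightarrow> real"

definition Fstar :: "real \<Rightarrow> real \<Rightarrow> (real \<Rightarrow> real \<Rightarrow> real) \<Rightarrow> real \<Rightarrow> real \<Rightarrow> lagr \<Rightarrow> (real \<Rightarrow> real) \<Rightarrow> real \<Rightarrow> real" where
  "Fstar a b k lam mu F y t = F (y t) (KP a b k lam mu y t) (dot a b y t) (BP a b k lam mu y t) t"

definition d1F :: "real \<Rightarrow> real \<Rightarrow> (real \<Rightarrow> real \<Rightarrow> real) \<Rightarrow> real \<Rightarrow> real \<Rightarrow> lagr \<Rightarrow> (real \<Rightarrow> real) \<Rightarrow> real \<Rightarrow> real" where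
  "d1F a b k lam mu F y t = deriv (\<lambda>z. F z (KP a b k lam mu y t) (dot a b y t) (BP a b k lam mu y t) t) (y t)"
definition d2F :: "real \<Rightarrow> real \<Rightarrow> (real \<Rightarrow> real \<Rightarrow> real) \<Rightarrow> real \<Rightarrow> real \<Rightarrow> lagr \<Rightarrow> (real \<Rightarrow> real) \<Rightarrow> real \<Rightarrow> real" where
  "d2F a b k lam mu F y t = deriv (\<lambda>z. F (y t) z (dot a b y t) (BP a b k lam mu y t) t) (KP a b k lam mu y t)"
definition d3F :: "real \<Rightarrow> real \<Rightarrow> (real \<Rightarrow> real \<Rightarrow> real) \<Rightarrow> real \<Rightarrow> real \<Rightarrow> lagr \<Rightarrow> (real \<Rightarrow> real) \<Rightarrow> real \<Rightarrow> real" where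
  "d3F a b k lam mu F y t = deriv (\<lambda>z. F (y t) (KP a b k lam mu y t) z (BP a b k lam mu y t) t) (dot a b y t)"
definition d4F :: "real \<Rightarrow> real \<Rightarrow> (real \<Rightarrow> real \<Rightarrow> real) \<Rightarrow> real \<Rightarrow> real \<Rightarrow> lagr \<Rightarrow> (real \<Rightarrow> real) \<Rightarrow> real \<Rightarrow> real" where
  "d4F a b k lam mu F y t = deriv (\<lambda>z. F (y t) (KP a b k lam mu y t) (dot a b y t) z t) (BP a b k lam mu y t)"

definition gen_frac_extremal :: "real \<Rightarrow> real \<Rightarrow> (real \<Rightarrow> real \<Rightarrow> real) \<Rightarrow> real \<Rightarrow> real \<Rightarrow> lagr \<Rightarrow> (real \<Rightarrow> real) \<Rightarrow> bool" where
  "gen_frac_extremal a b k lam mu F y \<longleftrightarrow>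
     admissible a b k lam mu y
     \<and> continuous_on {a..b} (KPs a b k lam mu (d2F a b k lam mu F y))
     \<and> C1_on {a..b} (d3F a b k lam mu F y)
     \<and> C1_on {a..b} (KPs a b k lam mu (d4F a b k lam mu F y))
     \<and> (\<forall>t\<in>{a<..<b}.
          deriv (d3F a b k lam mu F y) t + APs a b k lam mu (d4F a b k lam mu F y) t
          = d1F a b k lam mu F y t + KPs a b k lam mu (d2F a b k lam mu F y) t)"

definition xi :: "(real \<Rightarrow> real \<Rightarrow> real \<Rightarrow> real) \<Rightarrow> real \<Rightarrow> real \<Rightarrow> real" where
  "xi phi t x = deriv (\<lambda>\<theta>. phi \<theta> t x) 0"

end

theory Submission
  imports Defs
begin

(* Invariance makes theta \<mapsto> F(star_{y_theta})(t) constant for every t, where y_theta = phi(theta, ., y(.)).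
   Differentiating at theta = 0 gives the vanishing of the first variation
     d1F xi + d2F K_P[xi] + d3F xi' + d4F B_P[xi],    xi = xi(., y(.)).
   Differentiating K_P and B_P under the integral sign needs the slices k(t, .) and k(., t) to be
   integrable, which by Fubini holds for almost every t since k is in L^q(Delta), hence in L^1(Delta);
   continuity of the first variation then makes it vanish everywhere. Identifying d/dtheta of y_theta'
   with xi' uses the symmetry of the second derivative of phi. Finally, the product rule for
   d/dt (xi d3F) together with the Euler-Lagrange equation for d/dt d3F turns the vanishing first
   variation into the conservation law. *)

section \<open>Differentiation on a compact interval\<close>

lemma C1_on_imp_continuous_on: "C1_on S f \<Longrightarrow> continuous_on S f"
  unfolding C1_on_def continuous_on_eq_continuous_within
  by (auto intro: has_derivative_continuous)

lemma has_vector_derivative_blinfun: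
  fixes f :: "real \<Rightarrow> 'a::real_normed_vector"
  assumes "(f has_derivative blinfun_apply D) F"
  shows "(f has_vector_derivative D 1) F"
proof -
  have "blinfun_apply D = (\<lambda>h. h *\<^sub>R D 1)"
    by (rule ext) (metis blinfun.scaleR_right mult.right_neutral real_scaleR_def)
  then show ?thesis using assms unfolding has_vector_derivative_def by simp
qed

lemma dot_eq_vector_derivative:
  assumes "a < b" "s \<in> {a..b}" "(f has_vector_derivative D) (at s within {a..b})"
  shows "dot a b f s = D"
  unfolding dot_def using vector_derivative_within_closed_interval assms by blast

lemma C1_on_has_vector_derivative_dot:
  fixes f :: "real \<Rightarrow> real"
  assumes ab: "a < b" and f: "C1_on {a..b} f" and s: "s \<in> {a..b}"
  shows "(f has_vector_derivative dot a b f s) (at s within {a..b})"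
proof -
  obtain f' where "\<And>x. x \<in> {a..b} \<Longrightarrow> (f has_derivative blinfun_apply (f' x)) (at x within {a..b})"
    using f unfolding C1_on_def by blast
  then have "(f has_vector_derivative f' s 1) (at s within {a..b})"
    using s by (blast intro: has_vector_derivative_blinfun)
  with dot_eq_vector_derivative[OF ab s] show ?thesis by simp
qed

lemma C1_on_continuous_on_dot:
  fixes f :: "real \<Rightarrow> real"
  assumes ab: "a < b" and f: "C1_on {a..b} f"
  shows "continuous_on {a..b} (dot a b f)"
proof -
  obtain f' where f': "\<And>x. x \<in> {a..b} \<Longrightarrow> (f has_derivative blinfun_apply (f' x)) (at x within {a..b})"
    and "continuous_on {a..b} f'" using f unfolding C1_on_def by blast
  then have cont: "continuous_on {a..b} (\<lambda>s. f' s 1)"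
    by (intro continuous_intros) auto
  have "f' s 1 = dot a b f s" if "s \<in> {a..b}" for s
    using dot_eq_vector_derivative[OF ab that has_vector_derivative_blinfun[OF f'[OF that]]] by simp
  then show ?thesis by (rule continuous_on_eq[OF cont])
qed

lemma C1_on_has_real_derivative_dot:
  fixes f :: "real \<Rightarrow> real"
  assumes ab: "a < b" and f: "C1_on {a..b} f" and s: "s \<in> {a<..<b}"
  shows "(f has_real_derivative dot a b f s) (at s)"
proof -
  have "(f has_vector_derivative dot a b f s) (at s within {a..b})"
    using s by (intro C1_on_has_vector_derivative_dot[OF ab f]) auto
  then show ?thesis
    using s by (simp add: at_within_Icc_at has_real_derivative_iff_has_vector_derivative)
qed

lemma dot_cong:
  assumes eq: "\<And>s. s \<in> {a..b} \<Longrightarrow> f s = g s" and s: "s \<in> {a..b}"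
  shows "dot a b f s = dot a b g s"
proof -
  have "(f has_vector_derivative D) (at s within {a..b}) \<longleftrightarrow> (g has_vector_derivative D) (at s within {a..b})" for D
    using eq s by (intro has_vector_derivative_cong_ev) (auto simp: eventually_at_filter)
  then show ?thesis unfolding dot_def vector_derivative_def by simp
qed

lemma KP_cong:
  assumes eq: "\<And>s. s \<in> {a..b} \<Longrightarrow> f s = g s" and t: "t \<in> {a..b}"
  shows "KP a b k lam mu f t = KP a b k lam mu g t"
  unfolding KP_def using eq t
  by (intro arg_cong2[where f = "(+)"] arg_cong[where f = "(*) _"] set_lebesgue_integral_cong) auto

lemma has_real_derivative_compose_curve:
  fixes G :: "'a::real_normed_vector \<Rightarrow> real" and L :: "real \<Rightarrow> 'a"
  assumes G: "(G has_derivative DG) (at (L z0) within T)"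
    and V: "open V" "z0 \<in> V" "L ` V \<subseteq> T"
    and L: "(L has_derivative (\<lambda>h. h *\<^sub>R v)) (at z0)"
  shows "((\<lambda>z. G (L z)) has_real_derivative DG v) (at z0)"
proof -
  have "((G \<circ> L) has_derivative DG \<circ> (\<lambda>h. h *\<^sub>R v)) (at z0 within V)"
    by (rule diff_chain_within[OF has_derivative_at_withinI[OF L] has_derivative_subset[OF G V(3)]])
  moreover have "DG \<circ> (\<lambda>h. h *\<^sub>R v) = (*) (DG v)"
    using linear_scale[OF bounded_linear.linear[OF has_derivative_bounded_linear[OF G]]]
    by (auto simp: fun_eq_iff)
  ultimately show ?thesis
    using at_within_open[OF V(2,1)] by (simp add: has_field_derivative_def comp_def)
qed

lemma has_real_derivative_along_line:
  fixes f :: "'a::real_normed_vector \<Rightarrow> real"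
  assumes "(f has_derivative blinfun_apply D) (at (Q + s *\<^sub>R u))"
  shows "((\<lambda>s. f (Q + s *\<^sub>R u)) has_real_derivative D u) (at s)"
  by (rule has_real_derivative_compose_curve[where T = UNIV and V = UNIV])
    (use assms in \<open>auto intro!: derivative_eq_intros\<close>)

section \<open>Symmetry of second derivatives\<close>

lemma linearization_increment_bound:
  fixes f' :: "'a::real_normed_vector \<Rightarrow> 'a \<Rightarrow>\<^sub>L real" and B :: "'a \<Rightarrow>\<^sub>L 'a \<Rightarrow>\<^sub>L real"
  assumes lin: "\<And>w. norm w < r \<Longrightarrow> norm (f' (P + w) - f' P - B w) \<le> c * norm w"
    and w: "norm w1 < r" "norm w2 < r"
  shows "\<bar>f' (P + w1) u - f' (P + w2) u - B (w1 - w2) u\<bar> \<le> c * (norm w1 + norm w2) * norm u"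
proof -
  have "f' (P + w1) u - f' (P + w2) u - B (w1 - w2) u
      = (f' (P + w1) - f' P - B w1) u - (f' (P + w2) - f' P - B w2) u"
    by (simp add: blinfun.diff_left blinfun.diff_right)
  then have "\<bar>f' (P + w1) u - f' (P + w2) u - B (w1 - w2) u\<bar>
      \<le> norm ((f' (P + w1) - f' P - B w1) u) + norm ((f' (P + w2) - f' P - B w2) u)"
    by (simp only: real_norm_def abs_triangle_ineq4)
  also have "\<dots> \<le> norm (f' (P + w1) - f' P - B w1) * norm u + norm (f' (P + w2) - f' P - B w2) * norm u"
    by (intro add_mono norm_blinfun)
  also have "\<dots> \<le> c * norm w1 * norm u + c * norm w2 * norm u"
    using lin[OF w(1)] lin[OF w(2)] by (intro add_mono mult_right_mono) auto
  finally show ?thesis by (simp add: algebra_simps)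
qed

lemma second_difference_bound:
  fixes f :: "'a::real_normed_vector \<Rightarrow> real" and f' :: "'a \<Rightarrow> 'a \<Rightarrow>\<^sub>L real"
    and B :: "'a \<Rightarrow>\<^sub>L 'a \<Rightarrow>\<^sub>L real"
  assumes f': "\<And>x. x \<in> ball P r \<Longrightarrow> (f has_derivative blinfun_apply (f' x)) (at x)"
    and lin: "\<And>w. norm w < r \<Longrightarrow> norm (f' (P + w) - f' P - B w) \<le> c * norm w"
    and c: "0 \<le> c" and h: "0 \<le> h" "h * (norm u + norm v) < r"
  shows "\<bar>f (P + h *\<^sub>R v + h *\<^sub>R u) - f (P + h *\<^sub>R u) - f (P + h *\<^sub>R v) + f P - h * h * B v u\<bar>
           \<le> c * h * ((2 * norm u + norm v) * norm u) * h"
proof -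
  have small: "norm (t *\<^sub>R v + s *\<^sub>R u) \<le> h * (norm u + norm v)" "norm (t *\<^sub>R v + s *\<^sub>R u) < r"
    if "s \<in> {0..h}" "t \<in> {0..h}" for s t
  proof -
    have "norm (t *\<^sub>R v + s *\<^sub>R u) \<le> t * norm v + s * norm u"
      using norm_triangle_ineq[of "t *\<^sub>R v" "s *\<^sub>R u"] that by simp
    also have "\<dots> \<le> h * norm v + h * norm u"
      using that by (intro add_mono mult_right_mono) auto
    finally show "norm (t *\<^sub>R v + s *\<^sub>R u) \<le> h * (norm u + norm v)"
      by (simp add: distrib_left)
    with h show "norm (t *\<^sub>R v + s *\<^sub>R u) < r" by linarith
  qed
  define g where "g s = f (P + h *\<^sub>R v + s *\<^sub>R u) - f (P + s *\<^sub>R u) - s * h * B v u" for s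
  define g' where "g' s = f' (P + h *\<^sub>R v + s *\<^sub>R u) u - f' (P + s *\<^sub>R u) u - h * B v u" for s
  have "(g has_field_derivative g' s) (at s within {0..h})" if s: "s \<in> {0..h}" for s
  proof -
    have ball: "P + t *\<^sub>R v + s *\<^sub>R u \<in> ball P r" if "t \<in> {0..h}" for t
      using small(2)[OF s that] by (simp add: dist_norm add.assoc norm_minus_commute add.commute)
    have "((\<lambda>s. f (P + h *\<^sub>R v + s *\<^sub>R u)) has_real_derivative f' (P + h *\<^sub>R v + s *\<^sub>R u) u) (at s)"
      using h ball[of h] by (intro has_real_derivative_along_line f') auto
    moreover have "((\<lambda>s. f (P + s *\<^sub>R u)) has_real_derivative f' (P + s *\<^sub>R u) u) (at s)"
      using h ball[of 0] by (intro has_real_derivative_along_line f') auto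
    moreover have "((\<lambda>s. s * h * B v u) has_real_derivative h * B v u) (at s)"
      by (auto intro!: derivative_eq_intros)
    ultimately have "(g has_real_derivative g' s) (at s)"
      unfolding g_def g'_def by (intro DERIV_diff)
    then show ?thesis by (rule has_field_derivative_at_within)
  qed
  moreover have "norm (g' s) \<le> c * h * ((2 * norm u + norm v) * norm u)" if s: "s \<in> {0..h}" for s
  proof -
    have "norm (g' s) \<le> c * (norm (h *\<^sub>R v + s *\<^sub>R u) + norm (0 *\<^sub>R v + s *\<^sub>R u)) * norm u"
      using linearization_increment_bound[OF lin small(2)[OF s] small(2)[OF s], of h 0 u] s h
      by (simp add: g'_def add.assoc blinfun.scaleR_right blinfun.scaleR_left)
    also have "\<dots> \<le> c * (h * (norm u + norm v) + h * norm u) * norm u"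
      using small(1)[OF s, of h] s h c by (intro mult_right_mono mult_left_mono add_mono) (auto intro: mult_right_mono)
    finally show ?thesis by (simp add: algebra_simps)
  qed
  ultimately have "norm (g h - g 0) \<le> c * h * ((2 * norm u + norm v) * norm u) * norm (h - 0)"
    using h by (intro field_differentiable_bound[of "{0..h}"]) auto
  then show ?thesis using h by (simp add: g_def)
qed

lemma second_derivative_symmetric:
  fixes f :: "'a::real_normed_vector \<Rightarrow> real" and f' :: "'a \<Rightarrow> 'a \<Rightarrow>\<^sub>L real"
    and B :: "'a \<Rightarrow>\<^sub>L 'a \<Rightarrow>\<^sub>L real"
  assumes U: "open U" "P \<in> U"
    and f': "\<And>x. x \<in> U \<Longrightarrow> (f has_derivative blinfun_apply (f' x)) (at x)"
    and B: "(f' has_derivative blinfun_apply B) (at P)"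
  shows "B v u = B u v"
proof -
  define K where "K = (2 * norm u + norm v) * norm u + (2 * norm v + norm u) * norm v"
  have K: "K \<ge> 0" unfolding K_def by simp
  have bound: "\<bar>B v u - B u v\<bar> \<le> c * K" if c: "c > 0" for c
  proof -
    obtain d where d: "d > 0"
      and lin: "\<And>y. norm (y - P) < d \<Longrightarrow> norm (f' y - f' P - B (y - P)) \<le> c * norm (y - P)"
      using B c unfolding has_derivative_at_alt by blast
    obtain r where r: "r > 0" "ball P r \<subseteq> U" using U openE by blast
    define m where "m = min d r"
    define h where "h = m / (norm u + norm v + 1)"
    have m: "m > 0" using d r by (simp add: m_def)
    have N: "norm u + norm v + 1 > 0" by (simp add: add_nonneg_pos)
    have h: "0 < h" "h * (norm u + norm v) < m"
      using m N by (simp_all add: h_def field_simps)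
    have f'r: "(f has_derivative blinfun_apply (f' x)) (at x)" if "x \<in> ball P m" for x
      using f' r that by (auto simp: m_def)
    have linr: "norm (f' (P + w) - f' P - B w) \<le> c * norm w" if "norm w < m" for w
      using lin[of "P + w"] that by (simp add: m_def)
    have swap: "P + h *\<^sub>R v + h *\<^sub>R u = P + h *\<^sub>R u + h *\<^sub>R v" by (simp add: algebra_simps)
    have "\<bar>f (P + h *\<^sub>R v + h *\<^sub>R u) - f (P + h *\<^sub>R u) - f (P + h *\<^sub>R v) + f P - h * h * B v u\<bar>
           \<le> c * h * ((2 * norm u + norm v) * norm u) * h"
      using second_difference_bound[OF f'r linr _ _ h(2)] h c by simp
    moreover have "\<bar>f (P + h *\<^sub>R u + h *\<^sub>R v) - f (P + h *\<^sub>R v) - f (P + h *\<^sub>R u) + f P - h * h * B u v\<bar>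
           \<le> c * h * ((2 * norm v + norm u) * norm v) * h"
      using second_difference_bound[OF f'r linr _ _ h(2)[unfolded add.commute[of "norm u"]]] h c by simp
    ultimately have "\<bar>h * h * B v u - h * h * B u v\<bar>
        \<le> c * h * ((2 * norm u + norm v) * norm u) * h + c * h * ((2 * norm v + norm u) * norm v) * h"
      unfolding swap abs_le_iff by linarith
    also have "\<dots> = h * h * (c * K)" by (simp add: K_def algebra_simps)
    finally have "h * h * \<bar>B v u - B u v\<bar> \<le> h * h * (c * K)"
      using h by (simp add: abs_mult flip: right_diff_distrib)
    then show ?thesis using h by simp
  qed
  have "\<bar>B v u - B u v\<bar> \<le> 0 + e" if e: "e > 0" for e
  proof -
    have "\<bar>B v u - B u v\<bar> \<le> e / (K + 1) * K" using bound[of "e / (K + 1)"] K e by simp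
    also have "\<dots> \<le> e" using K e by (simp add: field_simps)
    finally show ?thesis by simp
  qed
  then have "\<bar>B v u - B u v\<bar> \<le> 0" by (rule field_le_epsilon)
  then show ?thesis by simp
qed

section \<open>Differentiation under the integral sign\<close>

lemma set_integrable_mult_continuous_on:
  fixes \<kappa> h :: "real \<Rightarrow> real"
  assumes \<kappa>: "set_integrable lebesgue A \<kappa>" and A: "A \<subseteq> {a..b}"
    and h: "continuous_on {a..b} h"
  shows "set_integrable lebesgue A (\<lambda>x. \<kappa> x * h x)"
proof -
  obtain M where M: "\<And>x. x \<in> {a..b} \<Longrightarrow> norm (h x) \<le> M"
    using compact_imp_bounded[OF compact_continuous_image[OF h compact_Icc]]
    unfolding bounded_iff by blast
  have "(\<lambda>x. indicator {a..b} x *\<^sub>R h x) \<in> borel_measurable lebesgue"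
    using borel_measurable_continuous_on_indicator[OF _ h] by (intro measurable_completion) simp
  moreover have "(\<lambda>x. indicator A x *\<^sub>R \<kappa> x) \<in> borel_measurable lebesgue"
    using \<kappa> unfolding set_integrable_def by (rule borel_measurable_integrable)
  ultimately have "(\<lambda>x. (indicator A x *\<^sub>R \<kappa> x) * (indicator {a..b} x *\<^sub>R h x)) \<in> borel_measurable lebesgue"
    by (rule borel_measurable_times[rotated])
  also have "(\<lambda>x. (indicator A x *\<^sub>R \<kappa> x) * (indicator {a..b} x *\<^sub>R h x)) = (\<lambda>x. indicator A x *\<^sub>R (\<kappa> x * h x))"
    using A by (auto simp: indicator_def fun_eq_iff)
  finally have meas: "set_borel_measurable lebesgue A (\<lambda>x. \<kappa> x * h x)"
    unfolding set_borel_measurable_def .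
  show ?thesis
  proof (rule set_integrable_bound[OF _ meas])
    show "set_integrable lebesgue A (\<lambda>x. M * \<kappa> x)" using \<kappa> by simp
    show "AE x in lebesgue. x \<in> A \<longrightarrow> norm (\<kappa> x * h x) \<le> norm (M * \<kappa> x)"
    proof (intro AE_I2 impI)
      fix x assume "x \<in> A"
      then have "\<bar>h x\<bar> \<le> \<bar>M\<bar>" using M A by force
      then show "norm (\<kappa> x * h x) \<le> norm (M * \<kappa> x)"
        by (simp add: abs_mult mult.commute[of "\<bar>M\<bar>"] mult_left_mono)
    qed
  qed
qed

lemma abs_set_integral_mult_le:
  fixes \<kappa> h :: "real \<Rightarrow> real"
  assumes \<kappa>: "set_integrable lebesgue A \<kappa>" and \<kappa>h: "set_integrable lebesgue A (\<lambda>x. \<kappa> x * h x)"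
    and M: "\<And>x. x \<in> A \<Longrightarrow> \<bar>h x\<bar> \<le> M"
  shows "\<bar>LINT x:A|lebesgue. \<kappa> x * h x\<bar> \<le> (LINT x:A|lebesgue. \<bar>\<kappa> x\<bar>) * M"
proof -
  have "\<bar>LINT x:A|lebesgue. \<kappa> x * h x\<bar> \<le> (LINT x:A|lebesgue. \<bar>\<kappa> x * h x\<bar>)"
    using set_integral_norm_bound[OF \<kappa>h] by simp
  also have "\<dots> \<le> (LINT x:A|lebesgue. \<bar>\<kappa> x\<bar> * M)"
    using \<kappa> \<kappa>h M
    by (intro set_integral_mono set_integrable_abs set_integrable_mult_left)
      (auto simp: abs_mult intro!: mult_left_mono)
  finally show ?thesis by simp
qed

definition has_uniform_derivative_at_0 :: "(real \<Rightarrow> 'a \<Rightarrow> real) \<Rightarrow> ('a \<Rightarrow> real) \<Rightarrow> 'a set \<Rightarrow> bool" where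
  "has_uniform_derivative_at_0 g G A \<longleftrightarrow>
     (\<forall>e>0. \<exists>d>0. \<forall>\<theta>. \<bar>\<theta>\<bar> < d \<longrightarrow> (\<forall>s\<in>A. \<bar>g \<theta> s - g 0 s - \<theta> * G s\<bar> \<le> e * \<bar>\<theta>\<bar>))"

lemma has_uniform_derivative_at_0I:
  fixes \<Phi> \<Phi>' :: "real \<Rightarrow> 'a \<Rightarrow> real"
  assumes eps: "eps > 0"
    and \<Phi>': "\<And>s \<theta>. s \<in> A \<Longrightarrow> \<bar>\<theta>\<bar> < eps \<Longrightarrow> ((\<lambda>\<theta>. \<Phi> \<theta> s) has_real_derivative \<Phi>' \<theta> s) (at \<theta>)"
    and lim: "uniform_limit A \<Phi>' (\<Phi>' 0) (at 0)"
    and G: "\<And>s. s \<in> A \<Longrightarrow> \<Phi>' 0 s = G s"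
  shows "has_uniform_derivative_at_0 \<Phi> G A"
  unfolding has_uniform_derivative_at_0_def
proof (intro allI impI)
  fix e :: real assume "e > 0"
  then obtain d where d: "d > 0"
    and near: "\<And>\<theta> s. 0 < \<bar>\<theta>\<bar> \<Longrightarrow> \<bar>\<theta>\<bar> < d \<Longrightarrow> s \<in> A \<Longrightarrow> \<bar>\<Phi>' \<theta> s - \<Phi>' 0 s\<bar> \<le> e"
    using lim unfolding uniform_limit_at_le_iff by (auto simp: dist_real_def)
  have "\<bar>\<Phi> \<theta> s - \<Phi> 0 s - \<theta> * \<Phi>' 0 s\<bar> \<le> e * \<bar>\<theta>\<bar>"
    if \<theta>: "\<bar>\<theta>\<bar> < min d eps" and s: "s \<in> A" for \<theta> s
  proof -
    let ?q = "\<lambda>x. \<Phi> x s - x * \<Phi>' 0 s"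
    have seg: "\<bar>x\<bar> \<le> \<bar>\<theta>\<bar>" if "x \<in> closed_segment 0 \<theta>" for x
      using that by (auto simp: closed_segment_eq_real_ivl split: if_splits)
    have "norm (?q \<theta> - ?q 0) \<le> e * norm (\<theta> - 0)"
    proof (rule field_differentiable_bound[OF convex_closed_segment])
      fix x assume x: "x \<in> closed_segment 0 \<theta>"
      have "\<bar>x\<bar> < eps" using seg[OF x] \<theta> by simp
      from DERIV_diff[OF \<Phi>'[OF s this] DERIV_cmult_right[OF DERIV_ident, of "\<Phi>' 0 s"]]
      show "(?q has_field_derivative \<Phi>' x s - \<Phi>' 0 s) (at x within closed_segment 0 \<theta>)"
        by (simp add: has_field_derivative_at_within)
      show "norm (\<Phi>' x s - \<Phi>' 0 s) \<le> e"
      proof (cases "x = 0")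
        case False
        then show ?thesis using near[of x s] seg[OF x] \<theta> s by simp
      qed (use \<open>e > 0\<close> in simp)
    qed auto
    then show ?thesis by (simp add: algebra_simps)
  qed
  then show "\<exists>d>0. \<forall>\<theta>. \<bar>\<theta>\<bar> < d \<longrightarrow> (\<forall>s\<in>A. \<bar>\<Phi> \<theta> s - \<Phi> 0 s - \<theta> * G s\<bar> \<le> e * \<bar>\<theta>\<bar>)"
    using d eps G by (intro exI[of _ "min d eps"]) auto
qed

lemma has_real_derivative_set_integral_param:
  fixes \<kappa> G :: "real \<Rightarrow> real" and g :: "real \<Rightarrow> real \<Rightarrow> real"
  assumes \<kappa>: "set_integrable lebesgue A \<kappa>" and A: "A \<subseteq> {a..b}" and eps: "eps > 0"
    and gc: "\<And>\<theta>. \<theta> \<in> {-eps..eps} \<Longrightarrow> continuous_on {a..b} (g \<theta>)"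
    and Gc: "continuous_on {a..b} G"
    and g: "has_uniform_derivative_at_0 g G {a..b}"
  shows "((\<lambda>\<theta>. LINT \<tau>:A|lebesgue. \<kappa> \<tau> * g \<theta> \<tau>) has_real_derivative (LINT \<tau>:A|lebesgue. \<kappa> \<tau> * G \<tau>)) (at 0)"
  unfolding has_field_derivative_def has_derivative_at_alt
proof (intro conjI allI impI bounded_linear_mult_right)
  fix e :: real assume e: "e > 0"
  define C where "C = (LINT \<tau>:A|lebesgue. \<bar>\<kappa> \<tau>\<bar>) + 1"
  have "(LINT \<tau>:A|lebesgue. \<bar>\<kappa> \<tau>\<bar>) \<ge> 0"
    unfolding set_lebesgue_integral_def by (rule Bochner_Integration.integral_nonneg) (auto simp: indicator_def)
  then have C: "C > 0" unfolding C_def by simp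
  have "e / C > 0" using e C by simp
  with g obtain d where d: "d > 0"
    and dd: "\<And>\<theta> s. \<bar>\<theta>\<bar> < d \<Longrightarrow> s \<in> {a..b} \<Longrightarrow> \<bar>g \<theta> s - g 0 s - \<theta> * G s\<bar> \<le> e / C * \<bar>\<theta>\<bar>"
    unfolding has_uniform_derivative_at_0_def by blast
  show "\<exists>d>0. \<forall>\<theta>. norm (\<theta> - 0) < d \<longrightarrow>
       norm ((LINT \<tau>:A|lebesgue. \<kappa> \<tau> * g \<theta> \<tau>) - (LINT \<tau>:A|lebesgue. \<kappa> \<tau> * g 0 \<tau>) -
          (LINT \<tau>:A|lebesgue. \<kappa> \<tau> * G \<tau>) * (\<theta> - 0)) \<le> e * norm (\<theta> - 0)"
  proof (intro exI[of _ "min d eps"] conjI allI impI)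
    show "min d eps > 0" using d eps by simp
    fix \<theta> :: real assume "norm (\<theta> - 0) < min d eps"
    then have \<theta>: "\<bar>\<theta>\<bar> < d" "\<theta> \<in> {-eps..eps}" by auto
    define r where "r \<tau> = g \<theta> \<tau> - g 0 \<tau> - \<theta> * G \<tau>" for \<tau>
    have int: "set_integrable lebesgue A (\<lambda>\<tau>. \<kappa> \<tau> * h \<tau>)" if "continuous_on {a..b} h" for h
      by (rule set_integrable_mult_continuous_on[OF \<kappa> A that])
    have cont: "continuous_on {a..b} (g \<theta>)" "continuous_on {a..b} (g 0)"
      using gc \<theta> eps by auto
    have "(LINT \<tau>:A|lebesgue. \<kappa> \<tau> * g \<theta> \<tau>) - (LINT \<tau>:A|lebesgue. \<kappa> \<tau> * g 0 \<tau>)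
          - (LINT \<tau>:A|lebesgue. \<kappa> \<tau> * G \<tau>) * \<theta> = (LINT \<tau>:A|lebesgue. \<kappa> \<tau> * r \<tau>)"
    proof -
      have "(LINT \<tau>:A|lebesgue. \<kappa> \<tau> * r \<tau>)
          = (LINT \<tau>:A|lebesgue. \<kappa> \<tau> * g \<theta> \<tau> - \<kappa> \<tau> * g 0 \<tau> - \<theta> * (\<kappa> \<tau> * G \<tau>))"
        by (simp add: r_def algebra_simps)
      also have "\<dots> = (LINT \<tau>:A|lebesgue. \<kappa> \<tau> * g \<theta> \<tau>) - (LINT \<tau>:A|lebesgue. \<kappa> \<tau> * g 0 \<tau>)
          - \<theta> * (LINT \<tau>:A|lebesgue. \<kappa> \<tau> * G \<tau>)"
        using int[OF cont(1)] int[OF cont(2)] int[OF Gc]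
        by (simp add: set_integral_diff set_integrable_mult_right)
      finally show ?thesis by simp
    qed
    also have "\<bar>\<dots>\<bar> \<le> (LINT \<tau>:A|lebesgue. \<bar>\<kappa> \<tau>\<bar>) * (e / C * \<bar>\<theta>\<bar>)"
    proof (rule abs_set_integral_mult_le[OF \<kappa> int])
      show "continuous_on {a..b} r" unfolding r_def using cont Gc by (intro continuous_intros)
      show "\<bar>r x\<bar> \<le> e / C * \<bar>\<theta>\<bar>" if "x \<in> A" for x
        using A dd[OF \<theta>(1)] that unfolding r_def by blast
    qed
    also have "\<dots> \<le> C * (e / C * \<bar>\<theta>\<bar>)"
      using e C by (intro mult_right_mono) (auto simp: C_def)
    also have "\<dots> = e * \<bar>\<theta>\<bar>" using C by simp
    finally show "norm ((LINT \<tau>:A|lebesgue. \<kappa> \<tau> * g \<theta> \<tau>) - (LINT \<tau>:A|lebesgue. \<kappa> \<tau> * g 0 \<tau>) -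
          (LINT \<tau>:A|lebesgue. \<kappa> \<tau> * G \<tau>) * (\<theta> - 0)) \<le> e * norm (\<theta> - 0)"
      by simp
  qed
qed

lemma KP_has_real_derivative_param:
  assumes k: "set_integrable lebesgue {a..t} (k t)" "set_integrable lebesgue {t..b} (\<lambda>\<tau>. k \<tau> t)"
    and t: "t \<in> {a..b}" and eps: "eps > 0"
    and gc: "\<And>\<theta>. \<theta> \<in> {-eps..eps} \<Longrightarrow> continuous_on {a..b} (g \<theta>)"
    and Gc: "continuous_on {a..b} G"
    and g: "has_uniform_derivative_at_0 g G {a..b}"
  shows "((\<lambda>\<theta>. KP a b k lam mu (g \<theta>) t) has_real_derivative KP a b k lam mu G t) (at 0)"
proof -
  have "{a..t} \<subseteq> {a..b}" "{t..b} \<subseteq> {a..b}" using t by auto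
  with k have "((\<lambda>\<theta>. LINT \<tau>:{a..t}|lebesgue. k t \<tau> * g \<theta> \<tau>) has_real_derivative
                   (LINT \<tau>:{a..t}|lebesgue. k t \<tau> * G \<tau>)) (at 0)"
    "((\<lambda>\<theta>. LINT \<tau>:{t..b}|lebesgue. k \<tau> t * g \<theta> \<tau>) has_real_derivative
                   (LINT \<tau>:{t..b}|lebesgue. k \<tau> t * G \<tau>)) (at 0)"
    by (auto intro: has_real_derivative_set_integral_param[OF _ _ eps gc Gc g])
  then show ?thesis unfolding KP_def by (intro DERIV_add DERIV_cmult)
qed

section \<open>Integrability of the kernel\<close>

lemma set_integrable_if_powr_integrable:
  fixes f :: "'a \<Rightarrow> real"
  assumes A: "A \<in> fmeasurable M" and q: "q \<ge> 1"
    and f: "set_borel_measurable M A f" and fq: "set_integrable M A (\<lambda>x. \<bar>f x\<bar> powr q)"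
  shows "set_integrable M A f"
proof (rule set_integrable_bound[OF _ f])
  show "set_integrable M A (\<lambda>x. 1 + \<bar>f x\<bar> powr q)"
  proof (rule set_integral_add[OF _ fq])
    show "set_integrable M A (\<lambda>_. 1::real)"
      using A unfolding set_integrable_def fmeasurable_def by (auto intro: integrable_indicator)
  qed
  have "\<bar>f x\<bar> \<le> 1 + \<bar>f x\<bar> powr q" for x
  proof (cases "\<bar>f x\<bar> \<le> 1")
    case False
    then have "\<bar>f x\<bar> powr 1 \<le> \<bar>f x\<bar> powr q" using q by (intro powr_mono) auto
    then show ?thesis using False by simp
  qed (use powr_ge_zero[of "\<bar>f x\<bar>" q] in linarith)
  then show "AE x in M. x \<in> A \<longrightarrow> norm (f x) \<le> norm (1 + \<bar>f x\<bar> powr q)"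
    by (intro AE_I2) simp
qed

lemma Delta_lmeasurable: "{(t, \<tau>). a \<le> \<tau> \<and> \<tau> < t \<and> t \<le> (b::real)} \<in> lmeasurable"
proof (rule bounded_set_imp_lmeasurable)
  have "{(t, \<tau>). a \<le> \<tau> \<and> \<tau> < t \<and> t \<le> b} = {z. a \<le> snd z} \<inter> {z. snd z < fst z} \<inter> {z. fst z \<le> b}"
    by auto
  also have "\<dots> \<in> sets borel"
    by (intro sets.Int borel_closed borel_open closed_Collect_le open_Collect_less continuous_intros)
  finally show "{(t, \<tau>). a \<le> \<tau> \<and> \<tau> < t \<and> t \<le> b} \<in> sets lebesgue"
    by (simp add: sets_completionI_sets)
  have "{(t, \<tau>). a \<le> \<tau> \<and> \<tau> < t \<and> t \<le> b} \<subseteq> cbox (a, a) (b, b)" by (auto simp: cbox_Pair_iff)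
  then show "bounded {(t, \<tau>). a \<le> \<tau> \<and> \<tau> < t \<and> t \<le> b}"
    using bounded_cbox bounded_subset by blast
qed

lemma integrable_slices_AE:
  fixes f :: "real \<times> real \<Rightarrow> real"
  assumes f: "integrable lebesgue f"
  shows "AE t in lborel. integrable lebesgue (\<lambda>\<tau>. f (t, \<tau>)) \<and> integrable lebesgue (\<lambda>\<tau>. f (\<tau>, t))"
proof -
  have "f \<in> borel_measurable (completion lborel)" using borel_measurable_integrable[OF f] by simp
  then obtain g where g: "g \<in> borel_measurable lborel" and fg: "AE z in lborel. f z = g z"
    using completion_ex_borel_measurable_real by blast
  have "integrable lebesgue g"
    using f measurable_completion[OF g] AE_completion[OF fg] by (rule integrable_cong_AE_imp)
  then have g_int: "integrable (lborel \<Otimes>\<^sub>M lborel) g"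
    using integrable_completion[OF g] by (simp add: lborel_prod)
  from fg obtain N where N: "{z \<in> space lborel. f z \<noteq> g z} \<subseteq> N" "N \<in> null_sets (lborel \<Otimes>\<^sub>M lborel)"
    by (auto elim!: AE_E simp: lborel_prod null_sets_def)
  have Neq: "f z = g z" if "z \<notin> N" for z using N(1) that by auto
  have "AE z in lborel \<Otimes>\<^sub>M lborel. z \<notin> N" using N(2) by (rule AE_not_in)
  then have N1: "AE t in lborel. AE \<tau> in lborel. (t, \<tau>) \<notin> N" by (rule lborel_pair.AE_pair)
  have "{z \<in> space (lborel \<Otimes>\<^sub>M lborel). (fst z, snd z) \<notin> N} = space (lborel \<Otimes>\<^sub>M lborel) - N" by auto
  then have "{z \<in> space (lborel \<Otimes>\<^sub>M lborel). (fst z, snd z) \<notin> N} \<in> sets (lborel \<Otimes>\<^sub>M lborel)"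
    using sets.compl_sets[OF null_setsD2[OF N(2)]] by (simp only:)
  from lborel_pair.AE_commute[OF this] N1 have N2: "AE t in lborel. AE \<tau> in lborel. (\<tau>, t) \<notin> N" by simp
  have slice_int: "integrable lebesgue (\<lambda>\<tau>. f (h \<tau>))"
    if h: "h \<in> borel_measurable borel" and "integrable lborel (\<lambda>\<tau>. g (h \<tau>))"
      and hN: "AE \<tau> in lborel. h \<tau> \<notin> N" for h :: "real \<Rightarrow> real \<times> real"
  proof -
    have gh: "(\<lambda>\<tau>. g (h \<tau>)) \<in> borel_measurable lborel"
      using measurable_compose[OF h] g by simp
    have "AE \<tau> in lborel. g (h \<tau>) = f (h \<tau>)"
      using hN by eventually_elim (simp add: Neq)
    then have "AE \<tau> in lebesgue. g (h \<tau>) = f (h \<tau>)" by (rule AE_completion)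
    moreover from this have "(\<lambda>\<tau>. f (h \<tau>)) \<in> borel_measurable lebesgue"
      by (rule borel_measurable_AE[OF measurable_completion[OF gh]])
    ultimately show ?thesis
      using integrable_completion[OF gh] \<open>integrable lborel (\<lambda>\<tau>. g (h \<tau>))\<close>
      by (metis integrable_cong_AE_imp)
  qed
  have "AE t in lborel. integrable lborel (\<lambda>\<tau>. g (t, \<tau>))" by (rule lborel_pair.AE_integrable_fst'[OF g_int])
  moreover have "AE t in lborel. integrable lborel (\<lambda>\<tau>. g (\<tau>, t))"
    using lborel_pair.AE_integrable_snd[of "\<lambda>x y. g (x, y)"] g_int by simp
  ultimately show ?thesis using N1 N2
    by eventually_elim (auto intro!: slice_int measurable_Pair borel_measurable_const)
qed

lemma kernel_slices_integrable_AE: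
  fixes k :: "real \<Rightarrow> real \<Rightarrow> real"
  assumes k: "set_integrable lebesgue {(t, \<tau>). a \<le> \<tau> \<and> \<tau> < t \<and> t \<le> b} (\<lambda>z. k (fst z) (snd z))"
  shows "AE t in lborel. t \<in> {a<..<b} \<longrightarrow>
           set_integrable lebesgue {a..t} (k t) \<and> set_integrable lebesgue {t..b} (\<lambda>\<tau>. k \<tau> t)"
proof -
  let ?\<Delta> = "{(t, \<tau>). a \<le> \<tau> \<and> \<tau> < t \<and> t \<le> b}"
  have "AE t in lborel. integrable lebesgue (\<lambda>\<tau>. indicator ?\<Delta> (t, \<tau>) *\<^sub>R k t \<tau>)
                      \<and> integrable lebesgue (\<lambda>\<tau>. indicator ?\<Delta> (\<tau>, t) *\<^sub>R k \<tau> t)"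
    using integrable_slices_AE[OF k[unfolded set_integrable_def]] by simp
  then show ?thesis
  proof eventually_elim
    case (elim t)
    \<comment> \<open>The slices of \<open>\<Delta>\<close> at \<open>t\<close> differ from \<open>[a, t]\<close> and \<open>[t, b]\<close> only at \<open>\<tau> = t\<close>.\<close>
    have off_diagonal: "integrable lebesgue f \<longleftrightarrow> integrable lebesgue g"
      if "\<And>\<tau>. \<tau> \<noteq> t \<Longrightarrow> f \<tau> = g \<tau>" for f g :: "real \<Rightarrow> real"
      using that by (intro integrable_discrete_difference[where X = "{t}"]) auto
    show ?case
    proof
      assume t: "t \<in> {a<..<b}"
      show "set_integrable lebesgue {a..t} (k t) \<and> set_integrable lebesgue {t..b} (\<lambda>\<tau>. k \<tau> t)"
        unfolding set_integrable_def using elim t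
        by (subst (1 2) off_diagonal) (auto simp: indicator_def)
    qed
  qed
qed

lemma continuous_on_AE_eq_0:
  fixes f :: "real \<Rightarrow> real"
  assumes f: "continuous_on {a<..<b} f"
    and ae: "AE t in lborel. t \<in> {a<..<b} \<longrightarrow> f t = 0"
    and t0: "t0 \<in> {a<..<b}"
  shows "f t0 = 0"
proof (rule ccontr)
  assume "f t0 \<noteq> 0"
  then obtain d where d: "d > 0"
    and near: "\<And>x. x \<in> {a<..<b} \<Longrightarrow> dist x t0 < d \<Longrightarrow> dist (f x) (f t0) < \<bar>f t0\<bar>"
    using f t0 unfolding continuous_on_iff by (meson zero_less_abs_iff)
  have nz: "f x \<noteq> 0" if "x \<in> {a<..<b}" "dist x t0 < d" for x
    using near[OF that] by auto
  define lo hi where "lo = max a (t0 - d)" and "hi = min b (t0 + d)"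
  have "AE t in lborel. t \<notin> {lo<..<hi}"
    using ae by eventually_elim (use nz in \<open>auto simp: lo_def hi_def dist_real_def\<close>)
  then have "emeasure lborel {lo<..<hi} = 0"
    by (subst (asm) AE_iff_measurable[of "{lo<..<hi}"]) auto
  moreover have "lo < hi" using t0 d by (auto simp: lo_def hi_def)
  ultimately show False by simp
qed

section \<open>Variations of an extremal\<close>

lemma partial_derivatives_eq_blinfun:
  fixes F :: lagr and D :: "(real \<times> real \<times> real \<times> real \<times> real) \<Rightarrow>\<^sub>L real"
  assumes F: "((\<lambda>(x1, x2, x3, x4, t). F x1 x2 x3 x4 t) has_derivative blinfun_apply D)
                (at (x1, x2, x3, x4, t) within UNIV \<times> UNIV \<times> UNIV \<times> UNIV \<times> {a..b})"
    and t: "t \<in> {a..b}"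
  shows "deriv (\<lambda>z. F z x2 x3 x4 t) x1 = D (1, 0, 0, 0, 0)"
    and "deriv (\<lambda>z. F x1 z x3 x4 t) x2 = D (0, 1, 0, 0, 0)"
    and "deriv (\<lambda>z. F x1 x2 z x4 t) x3 = D (0, 0, 1, 0, 0)"
    and "deriv (\<lambda>z. F x1 x2 x3 z t) x4 = D (0, 0, 0, 1, 0)"
proof -
  let ?F = "\<lambda>(x1, x2, x3, x4, t). F x1 x2 x3 x4 t"
  have line: "((\<lambda>z. ?F (L z)) has_real_derivative D v) (at z0)"
    if L: "L z0 = (x1, x2, x3, x4, t)" "(L has_derivative (\<lambda>h. h *\<^sub>R v)) (at z0)"
      and L_dom: "\<And>z. L z \<in> UNIV \<times> UNIV \<times> UNIV \<times> UNIV \<times> {a..b}"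
    for L :: "real \<Rightarrow> real \<times> real \<times> real \<times> real \<times> real" and z0 v
  proof -
    have "L ` UNIV \<subseteq> UNIV \<times> UNIV \<times> UNIV \<times> UNIV \<times> {a..b}" using L_dom by blast
    from has_real_derivative_compose_curve[OF _ open_UNIV UNIV_I this L(2)]
    show ?thesis using F L(1) by simp
  qed
  have "((\<lambda>z. ?F (z, x2, x3, x4, t)) has_real_derivative D (1, 0, 0, 0, 0)) (at x1)"
    by (rule line) (use t in \<open>auto intro!: derivative_eq_intros simp: zero_prod_def\<close>)
  then show "deriv (\<lambda>z. F z x2 x3 x4 t) x1 = D (1, 0, 0, 0, 0)"
    by (simp add: DERIV_imp_deriv)
  have "((\<lambda>z. ?F (x1, z, x3, x4, t)) has_real_derivative D (0, 1, 0, 0, 0)) (at x2)"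
    by (rule line) (use t in \<open>auto intro!: derivative_eq_intros simp: zero_prod_def\<close>)
  then show "deriv (\<lambda>z. F x1 z x3 x4 t) x2 = D (0, 1, 0, 0, 0)"
    by (simp add: DERIV_imp_deriv)
  have "((\<lambda>z. ?F (x1, x2, z, x4, t)) has_real_derivative D (0, 0, 1, 0, 0)) (at x3)"
    by (rule line) (use t in \<open>auto intro!: derivative_eq_intros simp: zero_prod_def\<close>)
  then show "deriv (\<lambda>z. F x1 x2 z x4 t) x3 = D (0, 0, 1, 0, 0)"
    by (simp add: DERIV_imp_deriv)
  have "((\<lambda>z. ?F (x1, x2, x3, z, t)) has_real_derivative D (0, 0, 0, 1, 0)) (at x4)"
    by (rule line) (use t in \<open>auto intro!: derivative_eq_intros simp: zero_prod_def\<close>)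
  then show "deriv (\<lambda>z. F x1 x2 x3 z t) x4 = D (0, 0, 0, 1, 0)"
    by (simp add: DERIV_imp_deriv)
qed

definition star_point :: "real \<Rightarrow> real \<Rightarrow> (real \<Rightarrow> real \<Rightarrow> real) \<Rightarrow> real \<Rightarrow> real \<Rightarrow> (real \<Rightarrow> real) \<Rightarrow> real
    \<Rightarrow> real \<times> real \<times> real \<times> real \<times> real" where
  "star_point a b k lam mu y t = (y t, KP a b k lam mu y t, dot a b y t, BP a b k lam mu y t, t)"

locale phi_variation =
  fixes a b eps :: real and phi :: "real \<Rightarrow> real \<Rightarrow> real \<Rightarrow> real"
    and Dp :: "real \<times> real \<times> real \<Rightarrow> (real \<times> real \<times> real) \<Rightarrow>\<^sub>L real"
    and DDp :: "real \<times> real \<times> real \<Rightarrow> (real \<times> real \<times> real) \<Rightarrow>\<^sub>L ((real \<times> real \<times> real) \<Rightarrow>\<^sub>L real)"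
    and y :: "real \<Rightarrow> real"
  assumes ab: "a < b" and eps: "0 < eps"
    and phi_has_derivative: "\<And>X. X \<in> {-eps..eps} \<times> {a..b} \<times> UNIV \<Longrightarrow>
       ((\<lambda>(\<theta>, t, x). phi \<theta> t x) has_derivative blinfun_apply (Dp X)) (at X within {-eps..eps} \<times> {a..b} \<times> UNIV)"
    and Dp_has_derivative: "\<And>X. X \<in> {-eps..eps} \<times> {a..b} \<times> UNIV \<Longrightarrow>
       (Dp has_derivative blinfun_apply (DDp X)) (at X within {-eps..eps} \<times> {a..b} \<times> UNIV)"
    and DDp_continuous: "continuous_on ({-eps..eps} \<times> {a..b} \<times> UNIV) DDp"
    and y_C1: "C1_on {a..b} y"
    and phi_0: "\<And>t x. t \<in> {a..b} \<Longrightarrow> phi 0 t x = x"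
begin

abbreviation "S \<equiv> {-eps..eps} \<times> {a..b} \<times> (UNIV::real set)"
abbreviation "yhat \<theta> \<equiv> \<lambda>s. phi \<theta> s (y s)"
abbreviation "\<xi>y \<equiv> \<lambda>s. xi phi s (y s)"
abbreviation "e\<^sub>\<theta> \<equiv> (1::real, 0::real, 0::real)"

definition "velocity s = (0::real, 1::real, dot a b y s)"

lemma Dp_continuous: "continuous_on S Dp"
  unfolding continuous_on_eq_continuous_within
  using Dp_has_derivative has_derivative_continuous by blast

lemma velocity_continuous: "continuous_on {a..b} velocity"
  unfolding velocity_def using C1_on_continuous_on_dot[OF ab y_C1] by (intro continuous_intros)

lemma y_continuous: "continuous_on {a..b} y"
  by (rule C1_on_imp_continuous_on[OF y_C1])

lemma has_real_derivative_theta: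
  assumes G: "\<And>X. X \<in> S \<Longrightarrow> (G has_derivative G' X) (at X within S)"
    and s: "s \<in> {a..b}" and \<theta>: "\<bar>\<theta>\<bar> < eps"
  shows "((\<lambda>\<theta>. G (\<theta>, s, x)) has_real_derivative G' (\<theta>, s, x) e\<^sub>\<theta>) (at \<theta>)"
proof (rule has_real_derivative_compose_curve[OF G _ _ _ _])
  show "(\<theta>, s, x) \<in> S" using s \<theta> by auto
  show "open {-eps<..<eps}" "\<theta> \<in> {-eps<..<eps}" using \<theta> by auto
  show "(\<lambda>\<theta>. (\<theta>, s, x)) ` {-eps<..<eps} \<subseteq> S" using s by auto
  show "((\<lambda>\<theta>. (\<theta>, s, x)) has_derivative (\<lambda>h. h *\<^sub>R e\<^sub>\<theta>)) (at \<theta>)"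
    by (auto intro!: derivative_eq_intros simp: zero_prod_def)
qed

lemma xi_eq: "s \<in> {a..b} \<Longrightarrow> xi phi s x = Dp (0, s, x) e\<^sub>\<theta>"
  unfolding xi_def using has_real_derivative_theta[OF phi_has_derivative, of s 0 x] eps
  by (simp add: DERIV_imp_deriv)

lemma yhat_has_real_derivative_param:
  "t \<in> {a..b} \<Longrightarrow> ((\<lambda>\<theta>. yhat \<theta> t) has_real_derivative \<xi>y t) (at 0)"
  using has_real_derivative_theta[OF phi_has_derivative, of t 0 "y t"] eps by (simp add: xi_eq)

lemma graph_has_derivative:
  assumes s: "s \<in> {a..b}"
  shows "((\<lambda>s. (\<theta>, s, y s)) has_derivative (\<lambda>h. h *\<^sub>R velocity s)) (at s within {a..b})"
  using C1_on_has_vector_derivative_dot[OF ab y_C1 s] unfolding velocity_def has_vector_derivative_def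
  by (auto intro!: derivative_eq_intros)

lemma graph_continuous: "continuous_on {a..b} (\<lambda>s. (\<theta>, s, y s))"
  using y_continuous by (intro continuous_intros)

lemma graph_in_S: "\<theta> \<in> {-eps..eps} \<Longrightarrow> (\<lambda>s. (\<theta>, s, y s)) ` {a..b} \<subseteq> S"
  by auto

lemma yhat_has_vector_derivative:
  assumes \<theta>: "\<theta> \<in> {-eps..eps}" and s: "s \<in> {a..b}"
  shows "(yhat \<theta> has_vector_derivative Dp (\<theta>, s, y s) (velocity s)) (at s within {a..b})"
proof -
  have "((\<lambda>(\<theta>, t, x). phi \<theta> t x) \<circ> (\<lambda>s. (\<theta>, s, y s)) has_derivative Dp (\<theta>, s, y s) \<circ> (\<lambda>h. h *\<^sub>R velocity s))
          (at s within {a..b})"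
    using \<theta> s by (intro diff_chain_within graph_has_derivative
        has_derivative_subset[OF phi_has_derivative graph_in_S]) auto
  then show ?thesis by (simp add: has_vector_derivative_def comp_def blinfun.scaleR_right)
qed

lemma dot_yhat: "\<theta> \<in> {-eps..eps} \<Longrightarrow> s \<in> {a..b} \<Longrightarrow> dot a b (yhat \<theta>) s = Dp (\<theta>, s, y s) (velocity s)"
  by (rule dot_eq_vector_derivative[OF ab _ yhat_has_vector_derivative])

lemma yhat_continuous: "\<theta> \<in> {-eps..eps} \<Longrightarrow> continuous_on {a..b} (yhat \<theta>)"
  unfolding continuous_on_eq_continuous_within
  using yhat_has_vector_derivative has_vector_derivative_continuous by blast

lemma dot_yhat_continuous:
  assumes \<theta>: "\<theta> \<in> {-eps..eps}"
  shows "continuous_on {a..b} (dot a b (yhat \<theta>))"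
proof -
  have "continuous_on {a..b} (\<lambda>s. Dp (\<theta>, s, y s) (velocity s))"
    using continuous_on_compose2[OF Dp_continuous graph_continuous graph_in_S[OF \<theta>]] velocity_continuous
    by (intro continuous_intros)
  then show ?thesis by (rule continuous_on_eq) (simp add: dot_yhat[OF \<theta>])
qed

lemma DDp_symmetric:
  assumes s: "s \<in> {a..b}"
  shows "DDp (0, s, y s) v1 v2 = DDp (0, s, y s) v2 v1"
proof -
  define U where "U = {-eps<..<eps} \<times> {a<..<b} \<times> (UNIV :: real set)"
  have U: "open U" "U \<subseteq> S" unfolding U_def by (auto intro!: open_Times)
  \<comment> \<open>Schwarz's theorem needs an open neighbourhood, so it applies only inside \<open>(a, b)\<close>;
      the endpoints follow by continuity.\<close>
  have interior: "DDp (0, t, x) v1 v2 = DDp (0, t, x) v2 v1" if t: "t \<in> {a<..<b}" for t x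
  proof (rule second_derivative_symmetric[OF U(1)])
    show "(0, t, x) \<in> U" using t eps by (simp add: U_def)
    show "((\<lambda>(\<theta>, t, x). phi \<theta> t x) has_derivative blinfun_apply (Dp X)) (at X)" if "X \<in> U" for X
      using phi_has_derivative[of X] that U at_within_open_subset[OF that U] by auto
    show "(Dp has_derivative blinfun_apply (DDp (0, t, x))) (at (0, t, x))"
      using Dp_has_derivative[of "(0, t, x)"] t eps U at_within_open_subset[of "(0, t, x)" U S]
      by (auto simp: U_def)
  qed
  have "continuous_on {a..b} (\<lambda>s. DDp (0, s, y s))"
    using continuous_on_compose2[OF DDp_continuous graph_continuous graph_in_S] eps by simp
  then have "continuous_on (closure {a<..<b}) (\<lambda>s. DDp (0, s, y s) v1 v2 - DDp (0, s, y s) v2 v1)"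
    using ab by (auto intro!: continuous_intros)
  then have "DDp (0, s, y s) v1 v2 - DDp (0, s, y s) v2 v1 = 0"
    by (rule continuous_constant_on_closure) (use interior s ab in auto)
  then show ?thesis by simp
qed

text \<open>Differentiating \<open>\<xi>(s, y s)\<close> in \<open>s\<close> yields the mixed second derivative of \<open>\<phi>\<close> in the order
  opposite to the one obtained by differentiating \<open>yhat \<theta>'\<close> in \<open>\<theta>\<close>; symmetry reconciles them.\<close>

lemma xi_y_has_vector_derivative:
  assumes s: "s \<in> {a..b}"
  shows "(\<xi>y has_vector_derivative DDp (0, s, y s) e\<^sub>\<theta> (velocity s)) (at s within {a..b})"
proof -
  have "(Dp \<circ> (\<lambda>s. (0, s, y s)) has_derivative DDp (0, s, y s) \<circ> (\<lambda>h. h *\<^sub>R velocity s)) (at s within {a..b})"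
    using s eps by (intro diff_chain_within graph_has_derivative
        has_derivative_subset[OF Dp_has_derivative graph_in_S]) auto
  from bounded_linear.has_derivative[OF blinfun.bounded_linear_left this, of e\<^sub>\<theta>]
  have "((\<lambda>s. Dp (0, s, y s) e\<^sub>\<theta>) has_vector_derivative DDp (0, s, y s) (velocity s) e\<^sub>\<theta>) (at s within {a..b})"
    by (simp add: has_vector_derivative_def comp_def blinfun.scaleR_right blinfun.scaleR_left)
  then have "(\<xi>y has_vector_derivative DDp (0, s, y s) (velocity s) e\<^sub>\<theta>) (at s within {a..b})"
    by (rule has_vector_derivative_transform[OF s, rotated]) (simp add: xi_eq)
  then show ?thesis using DDp_symmetric[OF s] by simp
qed

lemma dot_xi_y: "s \<in> {a..b} \<Longrightarrow> dot a b \<xi>y s = DDp (0, s, y s) e\<^sub>\<theta> (velocity s)"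
  by (rule dot_eq_vector_derivative[OF ab _ xi_y_has_vector_derivative])

lemma DDp_graph_continuous: "continuous_on {a..b} (\<lambda>s. DDp (0, s, y s))"
  using continuous_on_compose2[OF DDp_continuous graph_continuous graph_in_S] eps by simp

lemma dot_xi_y_continuous: "continuous_on {a..b} (dot a b \<xi>y)"
proof -
  have "continuous_on {a..b} (\<lambda>s. DDp (0, s, y s) e\<^sub>\<theta> (velocity s))"
    using DDp_graph_continuous velocity_continuous by (intro continuous_intros)
  then show ?thesis by (rule continuous_on_eq) (simp add: dot_xi_y)
qed

lemma uniform_limit_graph:
  assumes f: "continuous_on S f"
  shows "uniform_limit {a..b} (\<lambda>\<theta> s. f (\<theta>, s, y s)) (\<lambda>s. f (0, s, y s)) (at 0)"
  unfolding uniform_limit_at_iff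
proof (intro allI impI)
  fix e :: real assume e: "e > 0"
  obtain M where M: "\<And>s. s \<in> {a..b} \<Longrightarrow> norm (y s) \<le> M"
    using compact_imp_bounded[OF compact_continuous_image[OF y_continuous compact_Icc]]
    unfolding bounded_iff by blast
  define K where "K = {-eps..eps} \<times> {a..b} \<times> {-M..M}"
  have "compact K" "K \<subseteq> S" unfolding K_def by (auto intro!: compact_Times)
  then have "uniformly_continuous_on K f"
    using compact_uniformly_continuous continuous_on_subset[OF f] by blast
  with e obtain d where d: "d > 0" and near: "\<And>X X'. X \<in> K \<Longrightarrow> X' \<in> K \<Longrightarrow> dist X' X < d \<Longrightarrow> dist (f X') (f X) < e"
    unfolding uniformly_continuous_on_def by blast
  have "dist (f (\<theta>, s, y s)) (f (0, s, y s)) < e"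
    if "dist \<theta> 0 < min d eps" "s \<in> {a..b}" for \<theta> s
  proof (rule near)
    show "(\<theta>, s, y s) \<in> K" "(0, s, y s) \<in> K"
      using that M[of s] eps by (auto simp: K_def dist_real_def abs_le_iff)
    show "dist (\<theta>, s, y s) (0, s, y s) < d" using that by (simp add: dist_Pair_Pair)
  qed
  then show "\<exists>d>0. \<forall>\<theta>. 0 < dist \<theta> 0 \<and> dist \<theta> 0 < d \<longrightarrow> (\<forall>s\<in>{a..b}. dist (f (\<theta>, s, y s)) (f (0, s, y s)) < e)"
    using d eps by (intro exI[of _ "min d eps"]) auto
qed

lemma yhat_has_uniform_derivative: "has_uniform_derivative_at_0 yhat \<xi>y {a..b}"
proof (rule has_uniform_derivative_at_0I[OF eps, where \<Phi>' = "\<lambda>\<theta> s. Dp (\<theta>, s, y s) e\<^sub>\<theta>"])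
  show "((\<lambda>\<theta>. yhat \<theta> s) has_real_derivative Dp (\<theta>, s, y s) e\<^sub>\<theta>) (at \<theta>)"
    if "s \<in> {a..b}" "\<bar>\<theta>\<bar> < eps" for s \<theta>
    using has_real_derivative_theta[OF phi_has_derivative that] by simp
  show "uniform_limit {a..b} (\<lambda>\<theta> s. Dp (\<theta>, s, y s) e\<^sub>\<theta>) (\<lambda>s. Dp (0, s, y s) e\<^sub>\<theta>) (at 0)"
    by (rule bounded_linear.uniform_limit[OF blinfun.bounded_linear_left uniform_limit_graph[OF Dp_continuous]])
  show "Dp (0, s, y s) e\<^sub>\<theta> = \<xi>y s" if "s \<in> {a..b}" for s
    using xi_eq[OF that] by simp
qed

lemma dot_yhat_has_real_derivative_theta:
  assumes s: "s \<in> {a..b}" and \<theta>: "\<bar>\<theta>\<bar> < eps"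
  shows "((\<lambda>\<theta>. dot a b (yhat \<theta>) s) has_real_derivative DDp (\<theta>, s, y s) e\<^sub>\<theta> (velocity s)) (at \<theta>)"
proof -
  have "((\<lambda>\<theta>. Dp (\<theta>, s, y s) (velocity s)) has_real_derivative DDp (\<theta>, s, y s) e\<^sub>\<theta> (velocity s)) (at \<theta>)"
    using bounded_linear.has_derivative[OF blinfun.bounded_linear_left Dp_has_derivative]
    by (rule has_real_derivative_theta[OF _ s \<theta>])
  then show ?thesis
    by (rule has_field_derivative_transform_within_open[where S = "{-eps<..<eps}"])
      (use s \<theta> in \<open>auto simp: dot_yhat\<close>)
qed

lemma dot_yhat_has_uniform_derivative:
  "has_uniform_derivative_at_0 (\<lambda>\<theta>. dot a b (yhat \<theta>)) (dot a b \<xi>y) {a..b}"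
proof (rule has_uniform_derivative_at_0I[OF eps dot_yhat_has_real_derivative_theta])
  have "bounded (velocity ` {a..b})"
    using velocity_continuous by (intro compact_imp_bounded compact_continuous_image) auto
  moreover have "bounded ((\<lambda>s. DDp (0, s, y s) e\<^sub>\<theta>) ` {a..b})"
    using DDp_graph_continuous by (intro compact_imp_bounded compact_continuous_image continuous_intros) auto
  moreover have "uniform_limit {a..b} (\<lambda>\<theta> s. DDp (\<theta>, s, y s) e\<^sub>\<theta>) (\<lambda>s. DDp (0, s, y s) e\<^sub>\<theta>) (at 0)"
    by (rule bounded_linear.uniform_limit[OF blinfun.bounded_linear_left uniform_limit_graph[OF DDp_continuous]])
  ultimately show "uniform_limit {a..b} (\<lambda>\<theta> s. DDp (\<theta>, s, y s) e\<^sub>\<theta> (velocity s)) (\<lambda>s. DDp (0, s, y s) e\<^sub>\<theta> (velocity s)) (at 0)"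
    using bounded_bilinear.bounded_uniform_limit[OF bounded_bilinear_blinfun_apply _ uniform_limit_const]
    by blast
  show "DDp (0, s, y s) e\<^sub>\<theta> (velocity s) = dot a b \<xi>y s" if "s \<in> {a..b}" for s
    using dot_xi_y[OF that] by simp
qed

lemma dot_yhat_has_real_derivative_param:
  "t \<in> {a..b} \<Longrightarrow> ((\<lambda>\<theta>. dot a b (yhat \<theta>) t) has_real_derivative dot a b \<xi>y t) (at 0)"
  using dot_yhat_has_real_derivative_theta[of t 0] eps by (simp add: dot_xi_y)

lemma yhat_0: "s \<in> {a..b} \<Longrightarrow> yhat 0 s = y s"
  by (simp add: phi_0)

lemma star_point_yhat_0: "t \<in> {a..b} \<Longrightarrow> star_point a b k lam mu (yhat 0) t = star_point a b k lam mu y t"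
  unfolding star_point_def BP_def
  using yhat_0 dot_cong[OF yhat_0] KP_cong[OF yhat_0] KP_cong[OF dot_cong[OF yhat_0]] by simp

lemma xi_y_continuous: "continuous_on {a..b} \<xi>y"
  unfolding continuous_on_eq_continuous_within
  using xi_y_has_vector_derivative has_vector_derivative_continuous by blast

end

section \<open>The first variation and the conservation law\<close>

locale invariant_lagrangian = phi_variation a b eps phi Dp DDp y
  for a b eps phi Dp DDp y +
  fixes k :: "real \<Rightarrow> real \<Rightarrow> real" and lam mu :: real and F :: lagr
    and DF :: "real \<times> real \<times> real \<times> real \<times> real \<Rightarrow> (real \<times> real \<times> real \<times> real \<times> real) \<Rightarrow>\<^sub>L real"
  assumes F_has_derivative: "\<And>X. X \<in> UNIV \<times> UNIV \<times> UNIV \<times> UNIV \<times> {a..b} \<Longrightarrow>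
      ((\<lambda>(x1, x2, x3, x4, t). F x1 x2 x3 x4 t) has_derivative blinfun_apply (DF X))
        (at X within UNIV \<times> UNIV \<times> UNIV \<times> UNIV \<times> {a..b})"
    and DF_continuous: "continuous_on (UNIV \<times> UNIV \<times> UNIV \<times> UNIV \<times> {a..b}) DF"
    and invariant: "\<And>\<theta> t. \<theta> \<in> {-eps..eps} \<Longrightarrow> t \<in> {a..b} \<Longrightarrow>
      Fstar a b k lam mu F (yhat \<theta>) t = Fstar a b k lam mu F y t"
    and y_admissible: "admissible a b k lam mu y"
    and KP_xi_y_continuous: "continuous_on {a..b} (KP a b k lam mu \<xi>y)"
    and BP_xi_y_continuous: "continuous_on {a..b} (BP a b k lam mu \<xi>y)"
begin

definition first_variation :: "real \<Rightarrow> real" where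
  "first_variation t = DF (star_point a b k lam mu y t)
     (\<xi>y t, KP a b k lam mu \<xi>y t, dot a b \<xi>y t, BP a b k lam mu \<xi>y t, 0)"

lemma first_variation_eq:
  assumes t: "t \<in> {a..b}"
  shows "first_variation t = d1F a b k lam mu F y t * \<xi>y t + d2F a b k lam mu F y t * KP a b k lam mu \<xi>y t
           + d3F a b k lam mu F y t * dot a b \<xi>y t + d4F a b k lam mu F y t * BP a b k lam mu \<xi>y t"
proof -
  have split: "(\<xi>y t, KP a b k lam mu \<xi>y t, dot a b \<xi>y t, BP a b k lam mu \<xi>y t, 0) =
      \<xi>y t *\<^sub>R (1, 0, 0, 0, 0) + KP a b k lam mu \<xi>y t *\<^sub>R (0, 1, 0, 0, 0)
      + dot a b \<xi>y t *\<^sub>R (0, 0, 1, 0, 0) + BP a b k lam mu \<xi>y t *\<^sub>R (0, 0, 0, 1, 0)"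
    by simp
  have "((\<lambda>(x1, x2, x3, x4, t). F x1 x2 x3 x4 t) has_derivative blinfun_apply (DF (star_point a b k lam mu y t)))
      (at (star_point a b k lam mu y t) within UNIV \<times> UNIV \<times> UNIV \<times> UNIV \<times> {a..b})"
    using F_has_derivative t by (simp add: star_point_def)
  note partials = partial_derivatives_eq_blinfun[OF this[unfolded star_point_def] t]
  show ?thesis
    unfolding first_variation_def split d1F_def d2F_def d3F_def d4F_def partials star_point_def
      blinfun.add_right blinfun.scaleR_right
    by (simp only: real_scaleR_def mult.commute)
qed

lemma first_variation_continuous: "continuous_on {a<..<b} first_variation"
proof -
  have "continuous_on {a..b} (star_point a b k lam mu y)"
    using y_admissible C1_on_imp_continuous_on C1_on_continuous_on_dot[OF ab]
    unfolding star_point_def admissible_def by (auto intro!: continuous_intros)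
  then have "continuous_on {a..b} (\<lambda>t. DF (star_point a b k lam mu y t))"
    by (rule continuous_on_compose2[OF DF_continuous]) (auto simp: star_point_def)
  then have "continuous_on {a..b} first_variation"
    unfolding first_variation_def
    using xi_y_continuous KP_xi_y_continuous dot_xi_y_continuous BP_xi_y_continuous
    by (intro continuous_intros)
  then show ?thesis by (rule continuous_on_subset) auto
qed

lemma first_variation_eq_0_if_kernel_slices_integrable:
  assumes k: "set_integrable lebesgue {a..t} (k t)" "set_integrable lebesgue {t..b} (\<lambda>\<tau>. k \<tau> t)"
    and t: "t \<in> {a..b}"
  shows "first_variation t = 0"
proof -
  define c where "c \<theta> = star_point a b k lam mu (yhat \<theta>) t" for \<theta>
  define v where "v = (\<xi>y t, KP a b k lam mu \<xi>y t, dot a b \<xi>y t, BP a b k lam mu \<xi>y t, 0::real)"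
  let ?F = "\<lambda>(x1, x2, x3, x4, t). F x1 x2 x3 x4 t"
  have KP_yhat: "((\<lambda>\<theta>. KP a b k lam mu (yhat \<theta>) t) has_real_derivative KP a b k lam mu \<xi>y t) (at 0)"
    by (rule KP_has_real_derivative_param[OF k t eps yhat_continuous xi_y_continuous yhat_has_uniform_derivative])
  have BP_yhat: "((\<lambda>\<theta>. BP a b k lam mu (yhat \<theta>) t) has_real_derivative BP a b k lam mu \<xi>y t) (at 0)"
    unfolding BP_def
    by (rule KP_has_real_derivative_param[OF k t eps dot_yhat_continuous dot_xi_y_continuous
          dot_yhat_has_uniform_derivative])
  have "(c has_derivative (\<lambda>h. h *\<^sub>R v)) (at 0)"
    using yhat_has_real_derivative_param[OF t] KP_yhat dot_yhat_has_real_derivative_param[OF t] BP_yhat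
    unfolding c_def v_def star_point_def has_field_derivative_def
    by (auto intro!: derivative_eq_intros simp: mult.commute)
  moreover have "c ` UNIV \<subseteq> UNIV \<times> UNIV \<times> UNIV \<times> UNIV \<times> {a..b}" "c 0 \<in> UNIV \<times> UNIV \<times> UNIV \<times> UNIV \<times> {a..b}"
    using t by (auto simp: c_def star_point_def)
  ultimately have "((\<lambda>\<theta>. ?F (c \<theta>)) has_real_derivative DF (c 0) v) (at 0)"
    using has_real_derivative_compose_curve[OF F_has_derivative open_UNIV UNIV_I] by blast
  moreover have "((\<lambda>\<theta>. ?F (c \<theta>)) has_real_derivative 0) (at 0)"
    by (rule has_field_derivative_transform_within_open[where f = "\<lambda>_. Fstar a b k lam mu F y t" and S = "{-eps<..<eps}"])
      (use eps t invariant in \<open>auto simp: c_def star_point_def Fstar_def\<close>)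
  ultimately have "DF (c 0) v = 0" by (rule DERIV_unique)
  then show ?thesis using star_point_yhat_0[OF t] by (simp add: first_variation_def c_def v_def)
qed

lemma first_variation_vanishes:
  assumes k: "set_integrable lebesgue {(t, \<tau>). a \<le> \<tau> \<and> \<tau> < t \<and> t \<le> b} (\<lambda>z. k (fst z) (snd z))"
    and t: "t \<in> {a<..<b}"
  shows "first_variation t = 0"
proof (rule continuous_on_AE_eq_0[OF first_variation_continuous _ t])
  show "AE t in lborel. t \<in> {a<..<b} \<longrightarrow> first_variation t = 0"
    using kernel_slices_integrable_AE[OF k]
    by eventually_elim (auto intro: first_variation_eq_0_if_kernel_slices_integrable)
qed

end

lemma conservation_law_from_first_variation:
  fixes \<xi> g3 :: "real \<Rightarrow> real"
  assumes \<xi>: "(\<xi> has_real_derivative \<xi>') (at t)" and g3: "g3 field_differentiable at t"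
    and euler_lagrange: "deriv g3 t + A4 = g1 + K2"
    and first_variation: "g1 * \<xi> t + g2 * K\<xi> + g3 t * \<xi>' + g4 * B\<xi> = 0"
  shows "deriv (\<lambda>s. \<xi> s * g3 s) t + (\<xi> t * A4 + g4 * B\<xi>) + (- \<xi> t * K2 + g2 * K\<xi>) = 0"
proof -
  have "deriv (\<lambda>s. \<xi> s * g3 s) t = \<xi>' * g3 t + deriv g3 t * \<xi> t"
    using DERIV_mult[OF \<xi> g3[unfolded DERIV_deriv_iff_field_differentiable[symmetric]]]
    by (rule DERIV_imp_deriv)
  also have "\<dots> = \<xi>' * g3 t + (g1 + K2 - A4) * \<xi> t"
    using euler_lagrange by (simp add: eq_diff_eq)
  finally show ?thesis using first_variation by (simp add: algebra_simps)
qed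


lemma invariant_lagrangian_exists:
  assumes ab: "a < b" and eps: "0 < eps"
    and phi_C2: "C2_on ({-eps..eps} \<times> {a..b} \<times> UNIV) (\<lambda>(\<theta>, t, x). phi \<theta> t x)"
    and phi0: "\<And>t x. t \<in> {a..b} \<Longrightarrow> phi 0 t x = x"
    and F_C1: "C1_on (UNIV \<times> UNIV \<times> UNIV \<times> UNIV \<times> {a..b}) (\<lambda>(x1, x2, x3, x4, t). F x1 x2 x3 x4 t)"
    and adm: "admissible a b k lam mu y"
    and xi: "continuous_on {a..b} (KP a b k lam mu (\<lambda>\<tau>. xi phi \<tau> (y \<tau>)))"
      "continuous_on {a..b} (BP a b k lam mu (\<lambda>\<tau>. xi phi \<tau> (y \<tau>)))"
    and inv: "\<And>\<theta> t. \<theta> \<in> {-eps..eps} \<Longrightarrow> t \<in> {a..b} \<Longrightarrow>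
      Fstar a b k lam mu F y t = Fstar a b k lam mu F (\<lambda>s. phi \<theta> s (y s)) t"
  obtains Dp DDp DF where "invariant_lagrangian a b eps phi Dp DDp y k lam mu F DF"
proof -
  let ?S = "{-eps..eps} \<times> {a..b} \<times> (UNIV :: real set)"
  obtain Dp DDp where phi': "\<And>X. X \<in> ?S \<Longrightarrow>
      ((\<lambda>(\<theta>, t, x). phi \<theta> t x) has_derivative blinfun_apply (Dp X)) (at X within ?S)"
    and Dp': "\<And>X. X \<in> ?S \<Longrightarrow> (Dp has_derivative blinfun_apply (DDp X)) (at X within ?S)"
    and DDp: "continuous_on ?S DDp"
    using phi_C2 unfolding C2_on_def C1_on_def by blast
  obtain DF where F': "\<And>X. X \<in> UNIV \<times> UNIV \<times> UNIV \<times> UNIV \<times> {a..b} \<Longrightarrow>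
      ((\<lambda>(x1, x2, x3, x4, t). F x1 x2 x3 x4 t) has_derivative blinfun_apply (DF X))
        (at X within UNIV \<times> UNIV \<times> UNIV \<times> UNIV \<times> {a..b})"
    and DF: "continuous_on (UNIV \<times> UNIV \<times> UNIV \<times> UNIV \<times> {a..b}) DF"
    using F_C1 unfolding C1_on_def by blast
  have "invariant_lagrangian a b eps phi Dp DDp y k lam mu F DF"
    using ab eps phi' Dp' DDp adm phi0 F' DF xi inv
    by unfold_locales (auto simp: admissible_def)
  then show ?thesis by (rule that)
qed

theorem mainTheorem7:
  fixes a b p q lam mu eps :: real
    and k :: "real \<Rightarrow> real \<Rightarrow> real"
    and F :: lagr
    and phi :: "real \<Rightarrow> real \<Rightarrow> real \<Rightarrow> real"
    and y :: "real \<Rightarrow> real"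
  assumes ab: "a < b"
    and p: "1 < p" and q: "q = p / (p - 1)"
    and k_meas: "set_borel_measurable lebesgue {(t, \<tau>). a \<le> \<tau> \<and> \<tau> < t \<and> t \<le> b} (\<lambda>z. k (fst z) (snd z))"
    and k_Lq: "set_integrable lebesgue {(t, \<tau>). a \<le> \<tau> \<and> \<tau> < t \<and> t \<le> b} (\<lambda>z. \<bar>k (fst z) (snd z)\<bar> powr q)"
    and F_C1: "C1_on (UNIV \<times> UNIV \<times> UNIV \<times> UNIV \<times> {a..b})
                 (\<lambda>(x1, x2, x3, x4, t). F x1 x2 x3 x4 t)"
    and eps: "0 < eps"
    and phi_C2: "C2_on ({-eps..eps} \<times> {a..b} \<times> UNIV) (\<lambda>(\<theta>, t, x). phi \<theta> t x)"
    and phi0: "\<And>t x. t \<in> {a..b} \<Longrightarrow> phi 0 t x = x"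
    and inv_xi: "\<And>z. admissible a b k lam mu z \<Longrightarrow>
                   C1_on {a..b} (\<lambda>t. xi phi t (z t))
                 \<and> continuous_on {a..b} (KP a b k lam mu (\<lambda>\<tau>. xi phi \<tau> (z \<tau>)))
                 \<and> continuous_on {a..b} (BP a b k lam mu (\<lambda>\<tau>. xi phi \<tau> (z \<tau>)))"
    and inv_F: "\<And>z \<theta> t. admissible a b k lam mu z \<Longrightarrow> \<theta> \<in> {-eps..eps} \<Longrightarrow> t \<in> {a..b} \<Longrightarrow>
                 Fstar a b k lam mu F z t = Fstar a b k lam mu F (\<lambda>s. phi \<theta> s (z s)) t"
    and extremal: "gen_frac_extremal a b k lam mu F y"
  shows "\<forall>t\<in>{a<..<b}.
           deriv (\<lambda>s. xi phi s (y s) * d3F a b k lam mu F y s) t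
         + (xi phi t (y t) * APs a b k lam mu (d4F a b k lam mu F y) t
            + d4F a b k lam mu F y t * BP a b k lam mu (\<lambda>\<tau>. xi phi \<tau> (y \<tau>)) t)
         + (- xi phi t (y t) * KPs a b k lam mu (d2F a b k lam mu F y) t
            + d2F a b k lam mu F y t * KP a b k lam mu (\<lambda>\<tau>. xi phi \<tau> (y \<tau>)) t)
         = 0"
proof -
  have adm: "admissible a b k lam mu y" and d3F: "C1_on {a..b} (d3F a b k lam mu F y)"
    and EL: "\<And>t. t \<in> {a<..<b} \<Longrightarrow> deriv (d3F a b k lam mu F y) t + APs a b k lam mu (d4F a b k lam mu F y) t
                   = d1F a b k lam mu F y t + KPs a b k lam mu (d2F a b k lam mu F y) t"
    using extremal unfolding gen_frac_extremal_def by auto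
  note \<xi> = inv_xi[OF adm]
  obtain Dp DDp DF where "invariant_lagrangian a b eps phi Dp DDp y k lam mu F DF"
    using invariant_lagrangian_exists[OF ab eps phi_C2 phi0 F_C1 adm _ _ inv_F[OF adm]] \<xi> by blast
  then interpret invariant_lagrangian a b eps phi Dp DDp y k lam mu F DF .
  have "q \<ge> 1" using p q by (simp add: le_divide_eq)
  note k = set_integrable_if_powr_integrable[OF Delta_lmeasurable this k_meas k_Lq]
  show ?thesis
  proof (intro ballI conservation_law_from_first_variation)
    fix t assume t: "t \<in> {a<..<b}"
    show "(\<xi>y has_real_derivative dot a b \<xi>y t) (at t)"
      by (rule C1_on_has_real_derivative_dot[OF ab conjunct1[OF \<xi>] t])
    show "d3F a b k lam mu F y field_differentiable at t"
      using C1_on_has_real_derivative_dot[OF ab d3F t] by (auto simp: field_differentiable_def)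
    show "deriv (d3F a b k lam mu F y) t + APs a b k lam mu (d4F a b k lam mu F y) t
        = d1F a b k lam mu F y t + KPs a b k lam mu (d2F a b k lam mu F y) t"
      by (rule EL[OF t])
    show "d1F a b k lam mu F y t * \<xi>y t + d2F a b k lam mu F y t * KP a b k lam mu \<xi>y t
        + d3F a b k lam mu F y t * dot a b \<xi>y t + d4F a b k lam mu F y t * BP a b k lam mu \<xi>y t = 0"
      using first_variation_vanishes[OF k t] first_variation_eq[of t] t by simp
  qed
qed

end
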